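(* Let $(X,d)$ be a metric space, $x_0\in X$, $n\geq 1$. For all $a,b,c\in\pi_n(X,x_0)$, $\rho(a,b)=\rho(ac,bc)=\rho(ca,cb)$.
   Context: $\Omega^n(X,x_0)$ is the set of continuous maps $\alpha:[0,1]^n\to X$ with $\alpha(\partial[0,1]^n)=\{x_0\}$, with uniform metric $\mu(\alpha,\beta)=\sup_{t\in[0,1]^n}d(\alpha(t),\beta(t))$. For $a,b\in\pi_n(X,x_0)$, $\rho(a,b)=\inf\{\mu(\alpha,\beta)\mid\alpha\in a,\beta\in b\}$. *)

theory Defs
  imports "HOL-Analysis.Analysis"
begin

text \<open>The unit cube [0,1]^n, realised inside nat => real (product topology):
  coordinates 0..n-1 range over [0,1], all other coordinates are 0.\<close>
definition cube :: "nat \<Rightarrow> (nat \<Rightarrow> real) set" where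
  "cube n = {t. (\<forall>i<n. 0 \<le> t i \<and> t i \<le> 1) \<and> (\<forall>i\<ge>n. t i = 0)}"

definition cube_boundary :: "nat \<Rightarrow> (nat \<Rightarrow> real) set" where
  "cube_boundary n = {t \<in> cube n. \<exists>i<n. t i = 0 \<or> t i = 1}"

definition Omega :: "nat \<Rightarrow> 'a::metric_space \<Rightarrow> ((nat \<Rightarrow> real) \<Rightarrow> 'a) set" where
  "Omega n x0 = {\<alpha>. continuous_on (cube n) \<alpha> \<and> \<alpha> ` cube_boundary n \<subseteq> {x0}}"

definition rel_homotopic :: "nat \<Rightarrow> 'a::metric_space \<Rightarrow> ((nat \<Rightarrow> real) \<Rightarrow> 'a) \<Rightarrow> ((nat \<Rightarrow> real) \<Rightarrow> 'a) \<Rightarrow> bool" where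
  "rel_homotopic n x0 \<alpha> \<beta> =
     homotopic_with_canon (\<lambda>h. h ` cube_boundary n \<subseteq> {x0}) (cube n) UNIV \<alpha> \<beta>"

definition homclass :: "nat \<Rightarrow> 'a::metric_space \<Rightarrow> ((nat \<Rightarrow> real) \<Rightarrow> 'a) \<Rightarrow> ((nat \<Rightarrow> real) \<Rightarrow> 'a) set" where
  "homclass n x0 \<alpha> = {\<beta> \<in> Omega n x0. rel_homotopic n x0 \<alpha> \<beta>}"

definition pi_n :: "nat \<Rightarrow> 'a::metric_space \<Rightarrow> ((nat \<Rightarrow> real) \<Rightarrow> 'a) set set" where
  "pi_n n x0 = homclass n x0 ` Omega n x0"

definition cube_concat :: "((nat \<Rightarrow> real) \<Rightarrow> 'a) \<Rightarrow> ((nat \<Rightarrow> real) \<Rightarrow> 'a) \<Rightarrow> (nat \<Rightarrow> real) \<Rightarrow> 'a" where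
  "cube_concat \<alpha> \<beta> = (\<lambda>t. if t 0 \<le> 1/2 then \<alpha> (t(0 := 2 * t 0)) else \<beta> (t(0 := 2 * t 0 - 1)))"

definition pi_mult :: "nat \<Rightarrow> 'a::metric_space \<Rightarrow> ((nat \<Rightarrow> real) \<Rightarrow> 'a) set \<Rightarrow> ((nat \<Rightarrow> real) \<Rightarrow> 'a) set \<Rightarrow> ((nat \<Rightarrow> real) \<Rightarrow> 'a) set" where
  "pi_mult n x0 a b = homclass n x0 (cube_concat (SOME \<alpha>. \<alpha> \<in> a) (SOME \<beta>. \<beta> \<in> b))"

definition mu :: "nat \<Rightarrow> ((nat \<Rightarrow> real) \<Rightarrow> 'a::metric_space) \<Rightarrow> ((nat \<Rightarrow> real) \<Rightarrow> 'a) \<Rightarrow> real" where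
  "mu n \<alpha> \<beta> = (SUP t\<in>cube n. dist (\<alpha> t) (\<beta> t))"

definition rho :: "nat \<Rightarrow> ((nat \<Rightarrow> real) \<Rightarrow> 'a::metric_space) set \<Rightarrow> ((nat \<Rightarrow> real) \<Rightarrow> 'a) set \<Rightarrow> real" where
  "rho n a b = Inf {mu n \<alpha> \<beta> | \<alpha> \<beta>. \<alpha> \<in> a \<and> \<beta> \<in> b}"

end

(* Fix a representative gamma of c.  Concatenation alpha |-> alpha gamma sends representatives of
   a, b to representatives of ac, bc without changing uniform distances: where both loops run
   through gamma their distance is 0, a value already attained on the boundary.  Concatenation
   with the reversed loop gamma^-1 sends representatives of ac, bc back into a, b, because
   (alpha gamma) gamma^-1 is homotopic to alpha relative to the boundary.  Hence the two infima
   defining rho are taken over the same set of values; the same argument works on the left. *)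

theory Submission
  imports Defs
begin

lemma cube_boundary_subset: "cube_boundary n \<subseteq> cube n"
  unfolding cube_boundary_def by auto

lemma zero_in_cube: "(\<lambda>_. 0) \<in> cube n"
  unfolding cube_def by simp

lemma cube_coord0: "0 < n \<Longrightarrow> t \<in> cube n \<Longrightarrow> 0 \<le> t 0 \<and> t 0 \<le> 1"
  unfolding cube_def by auto

lemma cube_upd0: "0 < n \<Longrightarrow> t \<in> cube n \<Longrightarrow> v \<in> {0..1} \<Longrightarrow> t(0 := v) \<in> cube n"
  unfolding cube_def by auto

lemma cube_boundary_upd0:
  assumes "0 < n" "t \<in> cube_boundary n" "v \<in> {0..1}" "t 0 \<in> {0, 1} \<Longrightarrow> v \<in> {0, 1}"
  shows "t(0 := v) \<in> cube_boundary n"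
proof -
  obtain i where "i < n" "t i = 0 \<or> t i = 1" "t \<in> cube n"
    using assms(2) unfolding cube_boundary_def by auto
  then show ?thesis
    using assms cube_upd0[of n t v] unfolding cube_boundary_def
    by (cases "i = 0") (auto intro!: exI[of _ i])
qed

lemma cube_face_upd0: "0 < n \<Longrightarrow> t \<in> cube n \<Longrightarrow> v \<in> {0, 1} \<Longrightarrow> t(0 := v) \<in> cube_boundary n"
  unfolding cube_boundary_def using cube_upd0[of n t v] by auto

lemma Omega_continuous_on: "\<alpha> \<in> Omega n x0 \<Longrightarrow> continuous_on (cube n) \<alpha>"
  unfolding Omega_def by auto

lemma Omega_boundary: "\<alpha> \<in> Omega n x0 \<Longrightarrow> t \<in> cube_boundary n \<Longrightarrow> \<alpha> t = x0"
  unfolding Omega_def by auto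

lemma Omega_face: "\<alpha> \<in> Omega n x0 \<Longrightarrow> 0 < n \<Longrightarrow> t \<in> cube n \<Longrightarrow> v \<in> {0, 1} \<Longrightarrow> \<alpha> (t(0 := v)) = x0"
  using Omega_boundary cube_face_upd0 by metis

lemma Omega_boundary_upd0:
  "\<alpha> \<in> Omega n x0 \<Longrightarrow> 0 < n \<Longrightarrow> t \<in> cube_boundary n \<Longrightarrow> v \<in> {0..1} \<Longrightarrow>
    (t 0 \<in> {0, 1} \<Longrightarrow> v \<in> {0, 1}) \<Longrightarrow> \<alpha> (t(0 := v)) = x0"
  using Omega_boundary cube_boundary_upd0 by metis

lemma continuous_on_fun_upd [continuous_intros]:
  fixes g :: "'a::topological_space \<Rightarrow> 'i \<Rightarrow> 'b::topological_space"
  assumes "continuous_on S g" "continuous_on S h"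
  shows "continuous_on S (\<lambda>x. (g x)(i := h x))"
proof (rule continuous_on_coordinatewise_then_product)
  fix j
  show "continuous_on S (\<lambda>x. ((g x)(i := h x)) j)"
    using assms continuous_on_product_then_coordinatewise[OF assms(1), of j] by (cases "j = i") auto
qed

lemma continuous_on_coordinate [continuous_intros]:
  "continuous_on S (\<lambda>t :: 'i \<Rightarrow> 'b::topological_space. t i)"
  by (rule continuous_on_subset[OF continuous_on_product_coordinates]) simp

lemma continuous_on_snd_coordinate [continuous_intros]:
  "continuous_on S (\<lambda>z. (snd z :: 'i \<Rightarrow> 'b::topological_space) i)"
  by (rule continuous_on_product_then_coordinatewise[OF continuous_on_snd[OF continuous_on_id]])

lemma continuous_on_compose_upd0:
  assumes "continuous_on (cube n) \<alpha>" "continuous_on S g" "continuous_on S \<phi>" "0 < n"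
    "\<forall>z\<in>S. g z \<in> cube n \<and> \<phi> z \<in> {0..1}"
  shows "continuous_on S (\<lambda>z. \<alpha> ((g z)(0 := \<phi> z)))"
proof (rule continuous_on_compose2[OF assms(1)])
  show "continuous_on S (\<lambda>z. (g z)(0 := \<phi> z))"
    using assms(2,3) by (rule continuous_on_fun_upd)
  show "(\<lambda>z. (g z)(0 := \<phi> z)) ` S \<subseteq> cube n"
    using assms(5) cube_upd0[OF assms(4)] by blast
qed

lemma continuous_on_compose_param_upd0:
  assumes "continuous_on (T \<times> cube n) F" "continuous_on S a" "continuous_on S g" "continuous_on S \<phi>"
    "0 < n" "\<forall>z\<in>S. a z \<in> T \<and> g z \<in> cube n \<and> \<phi> z \<in> {0..1}"
  shows "continuous_on S (\<lambda>z. F (a z, (g z)(0 := \<phi> z)))"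
proof (rule continuous_on_compose2[OF assms(1)])
  show "continuous_on S (\<lambda>z. (a z, (g z)(0 := \<phi> z)))"
    using assms(2-4) by (intro continuous_on_Pair continuous_on_fun_upd)
  show "(\<lambda>z. (a z, (g z)(0 := \<phi> z))) ` S \<subseteq> T \<times> cube n"
    using assms(6) cube_upd0[OF assms(5)] by blast
qed

lemma rel_homotopic_iff:
  "rel_homotopic n x0 p q \<longleftrightarrow>
    (\<exists>H. continuous_on ({0..1::real} \<times> cube n) H \<and>
      (\<forall>t\<in>cube n. H (0, t) = p t) \<and> (\<forall>t\<in>cube n. H (1, t) = q t) \<and>
      (\<forall>s\<in>{0..1}. \<forall>t\<in>cube_boundary n. H (s, t) = x0))"
  unfolding rel_homotopic_def
  apply (subst homotopic_with)
  using cube_boundary_subset[of n] apply (simp add: image_subset_iff subset_iff)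
  by (simp add: image_subset_iff)

lemma rel_homotopicI:
  assumes "continuous_on ({0..1::real} \<times> cube n) H"
    "\<forall>t\<in>cube n. H (0, t) = p t" "\<forall>t\<in>cube n. H (1, t) = q t"
    "\<forall>s\<in>{0..1}. \<forall>t\<in>cube_boundary n. H (s, t) = x0"
  shows "rel_homotopic n x0 p q"
  using assms unfolding rel_homotopic_iff by blast

lemma rel_homotopic_refl: "\<alpha> \<in> Omega n x0 \<Longrightarrow> rel_homotopic n x0 \<alpha> \<alpha>"
  unfolding rel_homotopic_def Omega_def by auto

lemma rel_homotopic_sym: "rel_homotopic n x0 p q \<Longrightarrow> rel_homotopic n x0 q p"
  unfolding rel_homotopic_def by (rule homotopic_with_symD)

lemma rel_homotopic_trans [trans]:
  "rel_homotopic n x0 p q \<Longrightarrow> rel_homotopic n x0 q r \<Longrightarrow> rel_homotopic n x0 p r"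
  unfolding rel_homotopic_def by (rule homotopic_with_trans)

lemma rel_homotopic_imp_Omega:
  assumes "rel_homotopic n x0 p q"
  shows "p \<in> Omega n x0" "q \<in> Omega n x0"
  using homotopic_with_imp_continuous[OF assms[unfolded rel_homotopic_def]]
    homotopic_with_imp_property[OF assms[unfolded rel_homotopic_def]]
  unfolding Omega_def by auto

lemma rel_homotopic_eq_on_cube:
  assumes "rel_homotopic n x0 p q" "\<forall>t\<in>cube n. p' t = p t" "\<forall>t\<in>cube n. q' t = q t"
  shows "rel_homotopic n x0 p' q'"
  using assms(1) unfolding rel_homotopic_def
  by (rule homotopic_with_eq)
    (use assms cube_boundary_subset[of n] in \<open>auto simp: image_subset_iff subset_iff\<close>)

lemma rel_homotopic_cube_concat:
  assumes n: "0 < n" and "rel_homotopic n x0 \<alpha> \<alpha>'" "rel_homotopic n x0 \<gamma> \<gamma>'"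
  shows "rel_homotopic n x0 (cube_concat \<alpha> \<gamma>) (cube_concat \<alpha>' \<gamma>')"
proof -
  obtain F where F: "continuous_on ({0..1::real} \<times> cube n) F"
    "\<forall>t\<in>cube n. F (0, t) = \<alpha> t" "\<forall>t\<in>cube n. F (1, t) = \<alpha>' t"
    "\<forall>s\<in>{0..1}. \<forall>t\<in>cube_boundary n. F (s, t) = x0"
    using assms(2) unfolding rel_homotopic_iff by blast
  obtain G where G: "continuous_on ({0..1::real} \<times> cube n) G"
    "\<forall>t\<in>cube n. G (0, t) = \<gamma> t" "\<forall>t\<in>cube n. G (1, t) = \<gamma>' t"
    "\<forall>s\<in>{0..1}. \<forall>t\<in>cube_boundary n. G (s, t) = x0"
    using assms(3) unfolding rel_homotopic_iff by blast
  define H where "H z = cube_concat (\<lambda>t. F (fst z, t)) (\<lambda>t. G (fst z, t)) (snd z)" for z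
  note fst_cont = continuous_on_fst[OF continuous_on_id]
    and snd_cont = continuous_on_snd[OF continuous_on_id]
  have "continuous_on ({0..1} \<times> cube n) H"
    unfolding H_def cube_concat_def
  proof (rule continuous_on_cases_le)
    show "continuous_on {z \<in> {0..1} \<times> cube n. snd z 0 \<le> 1/2}
        (\<lambda>z. F (fst z, (snd z)(0 := 2 * snd z 0)))"
      by (rule continuous_on_compose_param_upd0[OF F(1) fst_cont snd_cont])
        (intro continuous_intros, auto dest: cube_coord0[OF n] simp: n)
    show "continuous_on {z \<in> {0..1} \<times> cube n. 1/2 \<le> snd z 0}
        (\<lambda>z. G (fst z, (snd z)(0 := 2 * snd z 0 - 1)))"
      by (rule continuous_on_compose_param_upd0[OF G(1) fst_cont snd_cont])
        (intro continuous_intros, auto dest: cube_coord0[OF n] simp: n)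
    show "F (fst z, (snd z)(0 := 2 * snd z 0)) = G (fst z, (snd z)(0 := 2 * snd z 0 - 1))"
      if "z \<in> {0..1} \<times> cube n" "snd z 0 = 1/2" for z
      using that F(4) G(4) cube_face_upd0[OF n, of "snd z"] by (cases z) auto
  qed (rule continuous_on_snd_coordinate)
  moreover have "H (s, t) = x0" if "s \<in> {0..1}" "t \<in> cube_boundary n" for s t
    using that F(4) G(4) cube_boundary_upd0[OF n that(2)]
      cube_coord0[OF n cube_boundary_subset[THEN subsetD, OF that(2)]]
    unfolding H_def cube_concat_def by auto
  moreover have "H (0, t) = cube_concat \<alpha> \<gamma> t" "H (1, t) = cube_concat \<alpha>' \<gamma>' t"
    if "t \<in> cube n" for t
    using that F(2,3) G(2,3) cube_upd0[OF n] cube_coord0[OF n] by (auto simp: H_def cube_concat_def)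
  ultimately show ?thesis
    by (intro rel_homotopicI) auto
qed

lemma Omega_cube_concat:
  "0 < n \<Longrightarrow> \<alpha> \<in> Omega n x0 \<Longrightarrow> \<gamma> \<in> Omega n x0 \<Longrightarrow> cube_concat \<alpha> \<gamma> \<in> Omega n x0"
  by (metis rel_homotopic_cube_concat rel_homotopic_imp_Omega(1) rel_homotopic_refl)

definition cube_rev :: "((nat \<Rightarrow> real) \<Rightarrow> 'a) \<Rightarrow> (nat \<Rightarrow> real) \<Rightarrow> 'a" where
  "cube_rev \<gamma> = (\<lambda>t. \<gamma> (t(0 := 1 - t 0)))"

lemma Omega_cube_rev:
  assumes n: "0 < n" and \<gamma>: "\<gamma> \<in> Omega n x0"
  shows "cube_rev \<gamma> \<in> Omega n x0"
proof -
  have "continuous_on (cube n) (cube_rev \<gamma>)"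
    unfolding cube_rev_def
    by (rule continuous_on_compose_upd0[OF Omega_continuous_on[OF \<gamma>] continuous_on_id])
      (intro continuous_intros, auto dest: cube_coord0[OF n] simp: n)
  moreover have "cube_rev \<gamma> t = x0" if "t \<in> cube_boundary n" for t
    using Omega_boundary_upd0[OF \<gamma> n that, of "1 - t 0"]
      cube_coord0[OF n cube_boundary_subset[THEN subsetD, OF that]]
    unfolding cube_rev_def by auto
  ultimately show ?thesis
    unfolding Omega_def by auto
qed

lemma rel_homotopic_piecewise:
  fixes \<phi> \<psi> :: "real \<times> real \<Rightarrow> real"
  assumes n: "0 < n" and \<alpha>: "\<alpha> \<in> Omega n x0" and \<gamma>: "\<gamma> \<in> Omega n x0" and c: "0 \<le> c" "c \<le> 1"
    and \<phi>: "continuous_on ({0..1} \<times> {0..c}) \<phi>" "\<phi> ` ({0..1} \<times> {0..c}) \<subseteq> {0..1}"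
    and \<psi>: "continuous_on ({0..1} \<times> {c..1}) \<psi>" "\<psi> ` ({0..1} \<times> {c..1}) \<subseteq> {0..1}"
    and faces: "\<forall>s\<in>{0..1}. \<phi> (s, 0) \<in> {0, 1} \<and> \<phi> (s, c) \<in> {0, 1} \<and>
      \<psi> (s, c) \<in> {0, 1} \<and> \<psi> (s, 1) \<in> {0, 1}"
  shows "rel_homotopic n x0
    (\<lambda>t. if t 0 \<le> c then \<alpha> (t(0 := \<phi> (0, t 0))) else \<gamma> (t(0 := \<psi> (0, t 0))))
    (\<lambda>t. if t 0 \<le> c then \<alpha> (t(0 := \<phi> (1, t 0))) else \<gamma> (t(0 := \<psi> (1, t 0))))"
proof -
  define H where "H z = (if snd z 0 \<le> c then \<alpha> ((snd z)(0 := \<phi> (fst z, snd z 0)))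
    else \<gamma> ((snd z)(0 := \<psi> (fst z, snd z 0))))" for z :: "real \<times> (nat \<Rightarrow> real)"
  have coord: "0 \<le> t 0 \<and> t 0 \<le> 1" if "t \<in> cube n" for t
    using cube_coord0[OF n that] .
  note snd_cont = continuous_on_snd[OF continuous_on_id]
  have pair_cont: "continuous_on S (\<lambda>z. (fst z, snd z 0))" for S :: "(real \<times> (nat \<Rightarrow> real)) set"
    by (intro continuous_on_Pair continuous_on_fst continuous_on_id continuous_on_snd_coordinate)
  have cont: "continuous_on ({0..1} \<times> cube n) H"
    unfolding H_def
  proof (rule continuous_on_cases_le)
    show "continuous_on {z \<in> {0..1} \<times> cube n. snd z 0 \<le> c}
        (\<lambda>z. \<alpha> ((snd z)(0 := \<phi> (fst z, snd z 0))))"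
    proof (rule continuous_on_compose_upd0[OF Omega_continuous_on[OF \<alpha>] snd_cont _ n])
      show "continuous_on {z \<in> {0..1} \<times> cube n. snd z 0 \<le> c} (\<lambda>z. \<phi> (fst z, snd z 0))"
        by (rule continuous_on_compose2[OF \<phi>(1) pair_cont]) (auto dest: coord)
    qed (use \<phi>(2) coord in force)
    show "continuous_on {z \<in> {0..1} \<times> cube n. c \<le> snd z 0}
        (\<lambda>z. \<gamma> ((snd z)(0 := \<psi> (fst z, snd z 0))))"
    proof (rule continuous_on_compose_upd0[OF Omega_continuous_on[OF \<gamma>] snd_cont _ n])
      show "continuous_on {z \<in> {0..1} \<times> cube n. c \<le> snd z 0} (\<lambda>z. \<psi> (fst z, snd z 0))"
        by (rule continuous_on_compose2[OF \<psi>(1) pair_cont]) (auto dest: coord)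
    qed (use \<psi>(2) coord in force)
    show "\<alpha> ((snd z)(0 := \<phi> (fst z, snd z 0))) = \<gamma> ((snd z)(0 := \<psi> (fst z, snd z 0)))"
      if "z \<in> {0..1} \<times> cube n" "snd z 0 = c" for z
      using that faces Omega_face[OF \<alpha> n] Omega_face[OF \<gamma> n] by auto
  qed (rule continuous_on_snd_coordinate)
  have boundary: "\<forall>s\<in>{0..1::real}. \<forall>t\<in>cube_boundary n. H (s, t) = x0"
  proof (intro ballI)
    fix s :: real and t
    assume s: "s \<in> {0..1}" and t: "t \<in> cube_boundary n"
    have t0: "0 \<le> t 0" "t 0 \<le> 1"
      using coord cube_boundary_subset t by auto
    show "H (s, t) = x0"
    proof (cases "t 0 \<le> c")
      case True
      then show ?thesis
        using s t0 c faces \<phi>(2) unfolding H_def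
        by (auto intro!: Omega_boundary_upd0[OF \<alpha> n t])
    next
      case False
      then show ?thesis
        using s t0 c faces \<psi>(2) unfolding H_def
        by (auto intro!: Omega_boundary_upd0[OF \<gamma> n t])
    qed
  qed
  show ?thesis
    by (rule rel_homotopicI[OF cont _ _ boundary]) (simp_all add: H_def)
qed

lemma rel_homotopic_reparam:
  assumes n: "0 < n" and \<alpha>: "\<alpha> \<in> Omega n x0"
    and f: "continuous_on {0..1} f" "f ` {0..1} \<subseteq> {0..1}" "f 0 = 0" "f 1 = 1"
  shows "rel_homotopic n x0 (\<lambda>t. \<alpha> (t(0 := f (t 0)))) \<alpha>"
proof -
  define \<phi> where "\<phi> z = (1 - fst z) * f (snd z) + fst z * snd z" for z :: "real \<times> real"
  have range: "\<phi> ` ({0..1} \<times> {0..1}) \<subseteq> {0..1}"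
    unfolding \<phi>_def using f(2) by (auto intro!: convex_bound_le simp: image_subset_iff)
  have cont: "continuous_on ({0..1} \<times> {0..1}) \<phi>"
    unfolding \<phi>_def by (intro continuous_intros continuous_on_compose2[OF f(1)]) auto
  have "rel_homotopic n x0
      (\<lambda>t. if t 0 \<le> 1 then \<alpha> (t(0 := \<phi> (0, t 0))) else \<alpha> (t(0 := \<phi> (0, t 0))))
      (\<lambda>t. if t 0 \<le> 1 then \<alpha> (t(0 := \<phi> (1, t 0))) else \<alpha> (t(0 := \<phi> (1, t 0))))"
    using cont range
    by (intro rel_homotopic_piecewise[OF n \<alpha> \<alpha>] continuous_on_subset[OF cont]
        order_trans[OF image_mono range]) (auto simp: \<phi>_def f)
  then show ?thesis
    by (rule rel_homotopic_eq_on_cube) (simp_all add: \<phi>_def)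
qed

lemma rel_homotopic_cancel_right:
  assumes n: "0 < n" and \<alpha>: "\<alpha> \<in> Omega n x0" and \<gamma>: "\<gamma> \<in> Omega n x0"
  shows "rel_homotopic n x0 (cube_concat (cube_concat \<alpha> \<gamma>) (cube_rev \<gamma>)) \<alpha>"
proof -
  \<comment> \<open>On t 0 \<ge> 1/4 the loop runs through \<gamma> along the tent profile min (4u - 1) (2 - 2u);
    lowering the tent by s and cutting it off at 0 contracts this excursion to x0.\<close>
  define \<phi> where "\<phi> z = 4 * snd z" for z :: "real \<times> real"
  define \<psi> where "\<psi> z = max 0 (min (4 * snd z - 1) (2 - 2 * snd z) - fst z)" for z :: "real \<times> real"
  have "rel_homotopic n x0
      (\<lambda>t. if t 0 \<le> 1/4 then \<alpha> (t(0 := \<phi> (0, t 0))) else \<gamma> (t(0 := \<psi> (0, t 0))))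
      (\<lambda>t. if t 0 \<le> 1/4 then \<alpha> (t(0 := \<phi> (1, t 0))) else \<gamma> (t(0 := \<psi> (1, t 0))))"
  proof (rule rel_homotopic_piecewise[OF n \<alpha> \<gamma>])
    show "continuous_on ({0..1} \<times> {0..1/4}) \<phi>" "continuous_on ({0..1} \<times> {1/4..1}) \<psi>"
      unfolding \<phi>_def \<psi>_def by (intro continuous_intros)+
    show "\<phi> ` ({0..1} \<times> {0..1/4}) \<subseteq> {0..1}" "\<psi> ` ({0..1} \<times> {1/4..1}) \<subseteq> {0..1}"
      unfolding \<phi>_def \<psi>_def by (auto simp: image_subset_iff)
  qed (simp_all add: \<phi>_def \<psi>_def)
  moreover have "\<forall>t\<in>cube n. cube_concat (cube_concat \<alpha> \<gamma>) (cube_rev \<gamma>) t =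
      (if t 0 \<le> 1/4 then \<alpha> (t(0 := \<phi> (0, t 0))) else \<gamma> (t(0 := \<psi> (0, t 0))))"
  proof
    fix t
    assume "t \<in> cube n"
    then have t0: "0 \<le> t 0" "t 0 \<le> 1"
      using cube_coord0[OF n] by auto
    consider "t 0 \<le> 1/4" | "1/4 < t 0" "t 0 \<le> 1/2" | "1/2 < t 0"
      by linarith
    then show "cube_concat (cube_concat \<alpha> \<gamma>) (cube_rev \<gamma>) t =
      (if t 0 \<le> 1/4 then \<alpha> (t(0 := \<phi> (0, t 0))) else \<gamma> (t(0 := \<psi> (0, t 0))))"
    proof cases
      case 1
      then show ?thesis by (simp add: cube_concat_def \<phi>_def)
    next
      case 2
      then have "\<psi> (0, t 0) = 2 * (2 * t 0) - 1" by (simp add: \<psi>_def)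
      with 2 show ?thesis by (simp add: cube_concat_def)
    next
      case 3
      then have "\<psi> (0, t 0) = 1 - (2 * t 0 - 1)" using t0 by (simp add: \<psi>_def)
      with 3 show ?thesis by (simp add: cube_concat_def cube_rev_def)
    qed
  qed
  moreover have "\<forall>t\<in>cube n. \<alpha> (t(0 := min 1 (4 * t 0))) =
      (if t 0 \<le> 1/4 then \<alpha> (t(0 := \<phi> (1, t 0))) else \<gamma> (t(0 := \<psi> (1, t 0))))"
  proof
    fix t
    assume t: "t \<in> cube n"
    show "\<alpha> (t(0 := min 1 (4 * t 0))) =
      (if t 0 \<le> 1/4 then \<alpha> (t(0 := \<phi> (1, t 0))) else \<gamma> (t(0 := \<psi> (1, t 0))))"
    proof (cases "t 0 \<le> 1/4")
      case False
      then have "min 1 (4 * t 0) = 1" "\<psi> (1, t 0) = 0"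
        using cube_coord0[OF n t] by (auto simp: \<psi>_def)
      with False show ?thesis
        using Omega_face[OF \<alpha> n t] Omega_face[OF \<gamma> n t] by simp
    qed (simp add: \<phi>_def)
  qed
  ultimately have "rel_homotopic n x0 (cube_concat (cube_concat \<alpha> \<gamma>) (cube_rev \<gamma>))
      (\<lambda>t. \<alpha> (t(0 := min 1 (4 * t 0))))"
    by (rule rel_homotopic_eq_on_cube)
  also have "rel_homotopic n x0 (\<lambda>t. \<alpha> (t(0 := min 1 (4 * t 0)))) \<alpha>"
  proof (rule rel_homotopic_reparam[OF n \<alpha>])
    show "continuous_on {0..1} (\<lambda>u::real. min 1 (4 * u))"
      by (intro continuous_intros)
  qed auto
  finally show ?thesis .
qed

lemma rel_homotopic_cancel_left:
  assumes n: "0 < n" and \<alpha>: "\<alpha> \<in> Omega n x0" and \<gamma>: "\<gamma> \<in> Omega n x0"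
  shows "rel_homotopic n x0 (cube_concat (cube_rev \<gamma>) (cube_concat \<gamma> \<alpha>)) \<alpha>"
proof -
  \<comment> \<open>The mirror image: on t 0 \<le> 3/4 the loop follows \<gamma> along the valley profile
    max (1 - 2u) (4u - 2), which is raised by s and cut off at 1.\<close>
  define \<phi> where "\<phi> z = min 1 (max (1 - 2 * snd z) (4 * snd z - 2) + fst z)" for z :: "real \<times> real"
  define \<psi> where "\<psi> z = 4 * snd z - 3" for z :: "real \<times> real"
  have "rel_homotopic n x0
      (\<lambda>t. if t 0 \<le> 3/4 then \<gamma> (t(0 := \<phi> (0, t 0))) else \<alpha> (t(0 := \<psi> (0, t 0))))
      (\<lambda>t. if t 0 \<le> 3/4 then \<gamma> (t(0 := \<phi> (1, t 0))) else \<alpha> (t(0 := \<psi> (1, t 0))))"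
  proof (rule rel_homotopic_piecewise[OF n \<gamma> \<alpha>])
    show "continuous_on ({0..1} \<times> {0..3/4}) \<phi>" "continuous_on ({0..1} \<times> {3/4..1}) \<psi>"
      unfolding \<phi>_def \<psi>_def by (intro continuous_intros)+
    show "\<phi> ` ({0..1} \<times> {0..3/4}) \<subseteq> {0..1}" "\<psi> ` ({0..1} \<times> {3/4..1}) \<subseteq> {0..1}"
      unfolding \<phi>_def \<psi>_def by (auto simp: image_subset_iff)
  qed (simp_all add: \<phi>_def \<psi>_def)
  moreover have "\<forall>t\<in>cube n. cube_concat (cube_rev \<gamma>) (cube_concat \<gamma> \<alpha>) t =
      (if t 0 \<le> 3/4 then \<gamma> (t(0 := \<phi> (0, t 0))) else \<alpha> (t(0 := \<psi> (0, t 0))))"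
  proof
    fix t
    assume "t \<in> cube n"
    then have t0: "0 \<le> t 0" "t 0 \<le> 1"
      using cube_coord0[OF n] by auto
    consider "t 0 \<le> 1/2" | "1/2 < t 0" "t 0 \<le> 3/4" | "3/4 < t 0"
      by linarith
    then show "cube_concat (cube_rev \<gamma>) (cube_concat \<gamma> \<alpha>) t =
      (if t 0 \<le> 3/4 then \<gamma> (t(0 := \<phi> (0, t 0))) else \<alpha> (t(0 := \<psi> (0, t 0))))"
    proof cases
      case 1
      then have "\<phi> (0, t 0) = 1 - 2 * t 0" using t0 by (simp add: \<phi>_def)
      with 1 show ?thesis by (simp add: cube_concat_def cube_rev_def)
    next
      case 2
      then have "\<phi> (0, t 0) = 2 * (2 * t 0 - 1)" by (simp add: \<phi>_def)
      with 2 show ?thesis by (simp add: cube_concat_def)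
    next
      case 3
      then have "\<psi> (0, t 0) = 2 * (2 * t 0 - 1) - 1" by (simp add: \<psi>_def)
      with 3 show ?thesis by (simp add: cube_concat_def)
    qed
  qed
  moreover have "\<forall>t\<in>cube n. \<alpha> (t(0 := max 0 (4 * t 0 - 3))) =
      (if t 0 \<le> 3/4 then \<gamma> (t(0 := \<phi> (1, t 0))) else \<alpha> (t(0 := \<psi> (1, t 0))))"
  proof
    fix t
    assume t: "t \<in> cube n"
    show "\<alpha> (t(0 := max 0 (4 * t 0 - 3))) =
      (if t 0 \<le> 3/4 then \<gamma> (t(0 := \<phi> (1, t 0))) else \<alpha> (t(0 := \<psi> (1, t 0))))"
    proof (cases "t 0 \<le> 3/4")
      case True
      then have "max 0 (4 * t 0 - 3) = 0" "\<phi> (1, t 0) = 1"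
        using cube_coord0[OF n t] by (auto simp: \<phi>_def)
      with True show ?thesis
        using Omega_face[OF \<alpha> n t] Omega_face[OF \<gamma> n t] by simp
    qed (simp add: \<psi>_def)
  qed
  ultimately have "rel_homotopic n x0 (cube_concat (cube_rev \<gamma>) (cube_concat \<gamma> \<alpha>))
      (\<lambda>t. \<alpha> (t(0 := max 0 (4 * t 0 - 3))))"
    by (rule rel_homotopic_eq_on_cube)
  also have "rel_homotopic n x0 (\<lambda>t. \<alpha> (t(0 := max 0 (4 * t 0 - 3)))) \<alpha>"
  proof (rule rel_homotopic_reparam[OF n \<alpha>])
    show "continuous_on {0..1} (\<lambda>u::real. max 0 (4 * u - 3))"
      by (intro continuous_intros)
  qed auto
  finally show ?thesis .
qed

lemma image_cube_concat:
  assumes n: "0 < n"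
  shows "cube_concat f g ` cube n = f ` cube n \<union> g ` {t \<in> cube n. 0 < t 0}"
proof (intro equalityI subsetI)
  fix y
  assume "y \<in> cube_concat f g ` cube n"
  then obtain t where t: "t \<in> cube n" and y: "y = cube_concat f g t"
    by blast
  note t0 = cube_coord0[OF n t]
  show "y \<in> f ` cube n \<union> g ` {t \<in> cube n. 0 < t 0}"
  proof (cases "t 0 \<le> 1/2")
    case True
    then have "y = f (t(0 := 2 * t 0))" "t(0 := 2 * t 0) \<in> cube n"
      using y t0 cube_upd0[OF n t] by (auto simp: cube_concat_def)
    then show ?thesis by blast
  next
    case False
    then have "y = g (t(0 := 2 * t 0 - 1))" "t(0 := 2 * t 0 - 1) \<in> {t \<in> cube n. 0 < t 0}"
      using y t0 cube_upd0[OF n t] by (auto simp: cube_concat_def)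
    then show ?thesis by blast
  qed
next
  fix y
  assume "y \<in> f ` cube n \<union> g ` {t \<in> cube n. 0 < t 0}"
  then consider t where "t \<in> cube n" "y = f t" | t where "t \<in> cube n" "0 < t 0" "y = g t"
    by blast
  then show "y \<in> cube_concat f g ` cube n"
  proof cases
    case 1
    then have "y = cube_concat f g (t(0 := t 0 / 2))" "t(0 := t 0 / 2) \<in> cube n"
      using cube_coord0[OF n 1(1)] cube_upd0[OF n 1(1)] by (auto simp: cube_concat_def)
    then show ?thesis by blast
  next
    case 2
    then have "y = cube_concat f g (t(0 := (t 0 + 1) / 2))" "t(0 := (t 0 + 1) / 2) \<in> cube n"
      using cube_coord0[OF n 2(1)] cube_upd0[OF n 2(1)]
      by (auto simp: cube_concat_def add_divide_distrib)
    then show ?thesis by blast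
  qed
qed

lemma dist_cube_concat:
  "dist (cube_concat \<alpha> \<gamma> t) (cube_concat \<beta> \<delta> t) =
    cube_concat (\<lambda>t. dist (\<alpha> t) (\<beta> t)) (\<lambda>t. dist (\<gamma> t) (\<delta> t)) t"
  by (simp add: cube_concat_def)

lemma dist_image_Omega:
  assumes n: "0 < n" and "\<alpha> \<in> Omega n x0" "\<beta> \<in> Omega n x0"
  shows "(\<lambda>t. dist (\<alpha> t) (\<beta> t)) ` cube n =
    insert 0 ((\<lambda>t. dist (\<alpha> t) (\<beta> t)) ` {t \<in> cube n. 0 < t 0})"
proof -
  have face: "dist (\<alpha> t) (\<beta> t) = 0" if "t \<in> cube n" "\<not> 0 < t 0" for t
  proof -
    have "t(0 := 0) = t"
      using that cube_coord0[OF n] by fastforce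
    then show ?thesis
      using Omega_face[OF assms(2) n that(1), of 0] Omega_face[OF assms(3) n that(1), of 0] by simp
  qed
  have zero: "0 \<in> (\<lambda>t. dist (\<alpha> t) (\<beta> t)) ` cube n"
    using face[OF zero_in_cube] by (intro image_eqI[OF _ zero_in_cube]) simp
  show ?thesis
  proof (intro equalityI subsetI)
    fix d
    assume "d \<in> (\<lambda>t. dist (\<alpha> t) (\<beta> t)) ` cube n"
    then obtain t where "t \<in> cube n" "d = dist (\<alpha> t) (\<beta> t)"
      by blast
    then show "d \<in> insert 0 ((\<lambda>t. dist (\<alpha> t) (\<beta> t)) ` {t \<in> cube n. 0 < t 0})"
      using face by (cases "0 < t 0") auto
  qed (use zero in blast)
qed

text \<open>The sets of distance values coincide, so no boundedness is needed for the suprema.\<close>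

lemma mu_cube_concat_right:
  assumes "0 < n" "\<alpha> \<in> Omega n x0" "\<beta> \<in> Omega n x0"
  shows "mu n (cube_concat \<alpha> \<gamma>) (cube_concat \<beta> \<gamma>) = mu n \<alpha> \<beta>"
proof -
  have "(\<lambda>t. dist (cube_concat \<alpha> \<gamma> t) (cube_concat \<beta> \<gamma> t)) ` cube n =
      (\<lambda>t. dist (\<alpha> t) (\<beta> t)) ` cube n \<union> (\<lambda>t. 0) ` {t \<in> cube n. 0 < t 0}"
    by (simp add: dist_cube_concat image_cube_concat[OF assms(1)])
  also have "\<dots> = (\<lambda>t. dist (\<alpha> t) (\<beta> t)) ` cube n"
    using dist_image_Omega[OF assms] by auto
  finally show ?thesis
    unfolding mu_def by simp
qed

lemma mu_cube_concat_left:
  assumes "0 < n" "\<alpha> \<in> Omega n x0" "\<beta> \<in> Omega n x0"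
  shows "mu n (cube_concat \<gamma> \<alpha>) (cube_concat \<gamma> \<beta>) = mu n \<alpha> \<beta>"
proof -
  have "(\<lambda>t. dist (cube_concat \<gamma> \<alpha> t) (cube_concat \<gamma> \<beta> t)) ` cube n =
      (\<lambda>t. 0) ` cube n \<union> (\<lambda>t. dist (\<alpha> t) (\<beta> t)) ` {t \<in> cube n. 0 < t 0}"
    by (simp add: dist_cube_concat image_cube_concat[OF assms(1)])
  also have "\<dots> = (\<lambda>t. dist (\<alpha> t) (\<beta> t)) ` cube n"
    using dist_image_Omega[OF assms] zero_in_cube by auto
  finally show ?thesis
    unfolding mu_def by simp
qed

lemma homclass_eq: "rel_homotopic n x0 \<alpha> \<beta> \<Longrightarrow> homclass n x0 \<alpha> = homclass n x0 \<beta>"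
  unfolding homclass_def using rel_homotopic_sym rel_homotopic_trans by blast

lemma pi_n_Omega: "a \<in> pi_n n x0 \<Longrightarrow> \<alpha> \<in> a \<Longrightarrow> \<alpha> \<in> Omega n x0"
  unfolding pi_n_def homclass_def by auto

lemma pi_n_eq_homclass: "a \<in> pi_n n x0 \<Longrightarrow> \<alpha> \<in> a \<Longrightarrow> a = homclass n x0 \<alpha>"
  unfolding pi_n_def using homclass_eq unfolding homclass_def by blast

lemma pi_n_nonempty: "a \<in> pi_n n x0 \<Longrightarrow> \<exists>\<alpha>. \<alpha> \<in> a"
  unfolding pi_n_def homclass_def using rel_homotopic_refl by blast

lemma pi_mult_eq_homclass:
  assumes n: "0 < n" and a: "a \<in> pi_n n x0" "\<alpha> \<in> a" and c: "c \<in> pi_n n x0" "\<gamma> \<in> c"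
  shows "pi_mult n x0 a c = homclass n x0 (cube_concat \<alpha> \<gamma>)"
proof -
  have "(SOME \<alpha>. \<alpha> \<in> a) \<in> a" "(SOME \<gamma>. \<gamma> \<in> c) \<in> c"
    using someI_ex[OF pi_n_nonempty[OF a(1)]] someI_ex[OF pi_n_nonempty[OF c(1)]] .
  then have "rel_homotopic n x0 (SOME \<alpha>. \<alpha> \<in> a) \<alpha>" "rel_homotopic n x0 (SOME \<gamma>. \<gamma> \<in> c) \<gamma>"
    using a c pi_n_eq_homclass unfolding homclass_def by blast+
  then show ?thesis
    unfolding pi_mult_def by (intro homclass_eq rel_homotopic_cube_concat[OF n])
qed

lemma pi_mult_in_pi_n:
  assumes n: "0 < n" and a: "a \<in> pi_n n x0" and c: "c \<in> pi_n n x0"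
  shows "pi_mult n x0 a c \<in> pi_n n x0"
proof -
  obtain \<alpha> \<gamma> where \<alpha>: "\<alpha> \<in> a" and \<gamma>: "\<gamma> \<in> c"
    using pi_n_nonempty[OF a] pi_n_nonempty[OF c] by blast
  show ?thesis
    unfolding pi_mult_eq_homclass[OF n a \<alpha> c \<gamma>] pi_n_def
    by (rule imageI) (rule Omega_cube_concat[OF n pi_n_Omega[OF a \<alpha>] pi_n_Omega[OF c \<gamma>]])
qed

lemma cube_concat_in_pi_mult:
  assumes n: "0 < n" and "a \<in> pi_n n x0" "\<alpha> \<in> a" "c \<in> pi_n n x0" "\<gamma> \<in> c"
  shows "cube_concat \<alpha> \<gamma> \<in> pi_mult n x0 a c"
  unfolding pi_mult_eq_homclass[OF assms] homclass_def
  using Omega_cube_concat[OF n pi_n_Omega[OF assms(2,3)] pi_n_Omega[OF assms(4,5)]]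
  by (simp add: rel_homotopic_refl)

lemma pi_mult_cancel_right:
  assumes n: "0 < n" and a: "a \<in> pi_n n x0" and c: "c \<in> pi_n n x0" "\<gamma> \<in> c"
    and \<alpha>': "\<alpha>' \<in> pi_mult n x0 a c"
  shows "cube_concat \<alpha>' (cube_rev \<gamma>) \<in> a"
proof -
  obtain \<alpha> where \<alpha>: "\<alpha> \<in> a"
    using pi_n_nonempty[OF a] by blast
  have \<gamma>: "\<gamma> \<in> Omega n x0" "cube_rev \<gamma> \<in> Omega n x0"
    using pi_n_Omega[OF c] Omega_cube_rev[OF n] by auto
  have "\<alpha>' \<in> homclass n x0 (cube_concat \<alpha> \<gamma>)"
    using \<alpha>' pi_mult_eq_homclass[OF n a \<alpha> c] by simp
  then have \<alpha>'_Omega: "\<alpha>' \<in> Omega n x0" and h: "rel_homotopic n x0 (cube_concat \<alpha> \<gamma>) \<alpha>'"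
    unfolding homclass_def by auto
  have "rel_homotopic n x0 \<alpha> (cube_concat (cube_concat \<alpha> \<gamma>) (cube_rev \<gamma>))"
    using rel_homotopic_sym[OF rel_homotopic_cancel_right[OF n pi_n_Omega[OF a \<alpha>] \<gamma>(1)]] .
  also have "rel_homotopic n x0 \<dots> (cube_concat \<alpha>' (cube_rev \<gamma>))"
    using rel_homotopic_cube_concat[OF n h rel_homotopic_refl[OF \<gamma>(2)]] .
  finally show ?thesis
    using pi_n_eq_homclass[OF a \<alpha>] Omega_cube_concat[OF n \<alpha>'_Omega \<gamma>(2)]
    unfolding homclass_def by blast
qed

lemma pi_mult_cancel_left:
  assumes n: "0 < n" and a: "a \<in> pi_n n x0" and c: "c \<in> pi_n n x0" "\<gamma> \<in> c"
    and \<alpha>': "\<alpha>' \<in> pi_mult n x0 c a"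
  shows "cube_concat (cube_rev \<gamma>) \<alpha>' \<in> a"
proof -
  obtain \<alpha> where \<alpha>: "\<alpha> \<in> a"
    using pi_n_nonempty[OF a] by blast
  have \<gamma>: "\<gamma> \<in> Omega n x0" "cube_rev \<gamma> \<in> Omega n x0"
    using pi_n_Omega[OF c] Omega_cube_rev[OF n] by auto
  have "\<alpha>' \<in> homclass n x0 (cube_concat \<gamma> \<alpha>)"
    using \<alpha>' pi_mult_eq_homclass[OF n c a \<alpha>] by simp
  then have \<alpha>'_Omega: "\<alpha>' \<in> Omega n x0" and h: "rel_homotopic n x0 (cube_concat \<gamma> \<alpha>) \<alpha>'"
    unfolding homclass_def by auto
  have "rel_homotopic n x0 \<alpha> (cube_concat (cube_rev \<gamma>) (cube_concat \<gamma> \<alpha>))"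
    using rel_homotopic_sym[OF rel_homotopic_cancel_left[OF n pi_n_Omega[OF a \<alpha>] \<gamma>(1)]] .
  also have "rel_homotopic n x0 \<dots> (cube_concat (cube_rev \<gamma>) \<alpha>')"
    using rel_homotopic_cube_concat[OF n rel_homotopic_refl[OF \<gamma>(2)] h] .
  finally show ?thesis
    using pi_n_eq_homclass[OF a \<alpha>] Omega_cube_concat[OF n \<gamma>(2) \<alpha>'_Omega]
    unfolding homclass_def by blast
qed

lemma mu_values_subset:
  assumes "\<forall>\<alpha>\<in>a. f \<alpha> \<in> a'" "\<forall>\<beta>\<in>b. f \<beta> \<in> b'" "\<forall>\<alpha>\<in>a. \<forall>\<beta>\<in>b. mu n (f \<alpha>) (f \<beta>) = mu n \<alpha> \<beta>"
  shows "{mu n \<alpha> \<beta> | \<alpha> \<beta>. \<alpha> \<in> a \<and> \<beta> \<in> b} \<subseteq> {mu n \<alpha> \<beta> | \<alpha> \<beta>. \<alpha> \<in> a' \<and> \<beta> \<in> b'}"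
proof
  fix x
  assume "x \<in> {mu n \<alpha> \<beta> | \<alpha> \<beta>. \<alpha> \<in> a \<and> \<beta> \<in> b}"
  then obtain \<alpha> \<beta> where "\<alpha> \<in> a" "\<beta> \<in> b" "x = mu n \<alpha> \<beta>"
    by blast
  then have "f \<alpha> \<in> a'" "f \<beta> \<in> b'" "x = mu n (f \<alpha>) (f \<beta>)"
    using assms by auto
  then show "x \<in> {mu n \<alpha> \<beta> | \<alpha> \<beta>. \<alpha> \<in> a' \<and> \<beta> \<in> b'}"
    by blast
qed

lemma rho_pi_mult_right:
  assumes n: "0 < n" and a: "a \<in> pi_n n x0" and b: "b \<in> pi_n n x0" and c: "c \<in> pi_n n x0"
  shows "rho n a b = rho n (pi_mult n x0 a c) (pi_mult n x0 b c)"
proof -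
  obtain \<gamma> where \<gamma>: "\<gamma> \<in> c"
    using pi_n_nonempty[OF c] by blast
  have "{mu n \<alpha> \<beta> | \<alpha> \<beta>. \<alpha> \<in> a \<and> \<beta> \<in> b} \<subseteq>
      {mu n \<alpha> \<beta> | \<alpha> \<beta>. \<alpha> \<in> pi_mult n x0 a c \<and> \<beta> \<in> pi_mult n x0 b c}"
    using cube_concat_in_pi_mult[OF n a _ c \<gamma>] cube_concat_in_pi_mult[OF n b _ c \<gamma>]
      mu_cube_concat_right[OF n pi_n_Omega[OF a] pi_n_Omega[OF b]]
    by (intro mu_values_subset[where f = "\<lambda>\<alpha>. cube_concat \<alpha> \<gamma>"]) auto
  moreover have "{mu n \<alpha> \<beta> | \<alpha> \<beta>. \<alpha> \<in> pi_mult n x0 a c \<and> \<beta> \<in> pi_mult n x0 b c} \<subseteq>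
      {mu n \<alpha> \<beta> | \<alpha> \<beta>. \<alpha> \<in> a \<and> \<beta> \<in> b}"
    using pi_mult_cancel_right[OF n a c \<gamma>] pi_mult_cancel_right[OF n b c \<gamma>]
      mu_cube_concat_right[OF n pi_n_Omega[OF pi_mult_in_pi_n[OF n a c]]
        pi_n_Omega[OF pi_mult_in_pi_n[OF n b c]]]
    by (intro mu_values_subset[where f = "\<lambda>\<alpha>. cube_concat \<alpha> (cube_rev \<gamma>)"]) auto
  ultimately show ?thesis
    unfolding rho_def by (intro arg_cong[where f = Inf] subset_antisym)
qed

lemma rho_pi_mult_left:
  assumes n: "0 < n" and a: "a \<in> pi_n n x0" and b: "b \<in> pi_n n x0" and c: "c \<in> pi_n n x0"
  shows "rho n a b = rho n (pi_mult n x0 c a) (pi_mult n x0 c b)"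
proof -
  obtain \<gamma> where \<gamma>: "\<gamma> \<in> c"
    using pi_n_nonempty[OF c] by blast
  have "{mu n \<alpha> \<beta> | \<alpha> \<beta>. \<alpha> \<in> a \<and> \<beta> \<in> b} \<subseteq>
      {mu n \<alpha> \<beta> | \<alpha> \<beta>. \<alpha> \<in> pi_mult n x0 c a \<and> \<beta> \<in> pi_mult n x0 c b}"
    using cube_concat_in_pi_mult[OF n c \<gamma> a] cube_concat_in_pi_mult[OF n c \<gamma> b]
      mu_cube_concat_left[OF n pi_n_Omega[OF a] pi_n_Omega[OF b]]
    by (intro mu_values_subset[where f = "cube_concat \<gamma>"]) auto
  moreover have "{mu n \<alpha> \<beta> | \<alpha> \<beta>. \<alpha> \<in> pi_mult n x0 c a \<and> \<beta> \<in> pi_mult n x0 c b} \<subseteq>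
      {mu n \<alpha> \<beta> | \<alpha> \<beta>. \<alpha> \<in> a \<and> \<beta> \<in> b}"
    using pi_mult_cancel_left[OF n a c \<gamma>] pi_mult_cancel_left[OF n b c \<gamma>]
      mu_cube_concat_left[OF n pi_n_Omega[OF pi_mult_in_pi_n[OF n c a]]
        pi_n_Omega[OF pi_mult_in_pi_n[OF n c b]]]
    by (intro mu_values_subset[where f = "cube_concat (cube_rev \<gamma>)"]) auto
  ultimately show ?thesis
    unfolding rho_def by (intro arg_cong[where f = Inf] subset_antisym)
qed

theorem lemma4p3:
  fixes x0 :: "'a::metric_space" and n :: nat
  assumes "n \<ge> 1"
    and "a \<in> pi_n n x0" and "b \<in> pi_n n x0" and "c \<in> pi_n n x0"
  shows "rho n a b = rho n (pi_mult n x0 a c) (pi_mult n x0 b c)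
       \<and> rho n a b = rho n (pi_mult n x0 c a) (pi_mult n x0 c b)"
proof -
  have "0 < n"
    using assms(1) by simp
  then show ?thesis
    using rho_pi_mult_right rho_pi_mult_left assms(2-4) by blast
qed

end
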